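(* Let $(G_k)_{k\in\mathbb Z}$ be a gibonacci sequence and let $F_k$ denote the Fibonacci numbers. For every positive integer $n$ and all integers $m$, $s$ and $t$, \begin{equation*} 5\sum_{j = 1}^n (-F_{m - 5})^{n - j} F_m^{j - 1} G_{5(j + t) + m + s} = F_m^n G_{5(n + t + 1) + s} - (-1)^n F_{m - 5}^n G_{5(t + 1) + s}. \end{equation*}
   Context: A gibonacci sequence $(G_k)_{k\in\mathbb Z}$ is defined by arbitrary initial values $G_0=a$, $G_1=b$ (numbers, not both zero) and $G_k=G_{k-1}+G_{k-2}$ for all integers $k$. The Fibonacci numbers $F_k$ are the gibonacci sequence with $F_0=0$, $F_1=1$, extended to all integer indices by the same recurrence. The convention $0^0=1$ is used for powers. *)

theory Defs
  imports Complex_Main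
begin

definition gibonacci :: "(int \<Rightarrow> complex) \<Rightarrow> bool" where
  "gibonacci G \<longleftrightarrow> \<not> (G 0 = 0 \<and> G 1 = 0) \<and> (\<forall>k. G k = G (k - 1) + G (k - 2))"

text \<open>Fibonacci numbers extended to all integer indices by the same recurrence.\<close>
fun fib_nat_aux :: "nat \<Rightarrow> int" where
  "fib_nat_aux 0 = 0"
| "fib_nat_aux (Suc 0) = 1"
| "fib_nat_aux (Suc (Suc n)) = fib_nat_aux (Suc n) + fib_nat_aux n"

definition fibz :: "int \<Rightarrow> int" where
  "fibz k = (if k \<ge> 0 then fib_nat_aux (nat k) else (-1) ^ (nat (-k) + 1) * fib_nat_aux (nat (-k)))"

end

theory Submission
  imports Defs
begin

text \<open>Both sides of \<open>5 G(k + m) = F(m) G(k + 5) + F(m - 5) G(k)\<close> satisfy the Fibonacci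
  recurrence in \<open>m\<close> and agree at \<open>m = 0, 1\<close>, so they agree for all \<open>m\<close>. With
  \<open>a = F(m)\<close>, \<open>b = -F(m - 5)\<close> and \<open>Y(j) = G(5 (j + t + 1) + s)\<close> this turns five times
  the \<open>j\<close>-th summand into \<open>b\<^sup>n\<^sup>-\<^sup>j a\<^sup>j\<^sup>-\<^sup>1 (a Y(j) - b Y(j - 1))\<close>, and the sum telescopes
  to \<open>a\<^sup>n Y(n) - b\<^sup>n Y(0)\<close>.\<close>

lemma fibz_of_nat: "fibz (int n) = fib_nat_aux n"
  by (simp add: fibz_def)

lemma fibz_neg: "fibz (- int n) = (-1) ^ (n + 1) * fib_nat_aux n"
  by (simp add: fibz_def)

lemma fibz_add_two: "fibz (k + 2) = fibz (k + 1) + fibz k"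
proof -
  consider "k \<ge> 0" | "k = -1" | "k \<le> -2"
    by linarith
  then show ?thesis
  proof cases
    case 1
    then obtain n where "k = int n"
      by (metis nonneg_int_cases)
    then show ?thesis
      using fibz_of_nat[of n] fibz_of_nat[of "n + 1"] fibz_of_nat[of "n + 2"]
      by (simp add: add.commute)
  next
    case 2
    then show ?thesis by (simp add: fibz_def)
  next
    case 3
    then obtain n where "k = - int n - 2"
      by (intro that[of "nat (- k - 2)"]) simp
    then have "k + 2 = - int n" "k + 1 = - int (Suc n)" "k = - int (Suc (Suc n))"
      by simp_all
    moreover have "fibz (- int n) = fibz (- int (Suc n)) + fibz (- int (Suc (Suc n)))"
      by (simp only: fibz_neg) (simp add: algebra_simps)
    ultimately show ?thesis
      by metis
  qed
qed

lemma gibonacci_add_two: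
  assumes "gibonacci G"
  shows "G (k + 2) = G (k + 1) + G k"
  using assms unfolding gibonacci_def
  by (metis add_diff_cancel_right' diff_add_eq diff_diff_eq one_add_one)

lemma fib_recurrence_eq_zero:
  fixes f :: "int \<Rightarrow> 'a :: ab_group_add"
  assumes rec: "\<And>k. f (k + 2) = f (k + 1) + f k" and "f 0 = 0" "f 1 = 0"
  shows "f k = 0"
proof -
  have up: "f (int n) = 0 \<and> f (int n + 1) = 0" for n
    by (induction n) (use assms rec in \<open>simp_all add: ac_simps\<close>)
  have down: "f (- int n) = 0 \<and> f (1 - int n) = 0" for n
  proof (induction n)
    case (Suc n)
    have "f (- int n + 1) = f (- int n) + f (- int n - 1)"
      using rec[of "- int n - 1"] by simp
    then have "f (- int n - 1) = 0"
      using Suc by simp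
    moreover have "- int (Suc n) = - int n - 1" "1 - int (Suc n) = - int n"
      by simp_all
    ultimately show ?case
      using Suc by metis
  qed (use assms in simp)
  show ?thesis
    using up[of "nat k"] down[of "nat (- k)"] by (cases "k \<ge> 0") simp_all
qed

lemma fib_recurrence_add_eq:
  fixes G :: "int \<Rightarrow> 'a :: comm_ring_1"
  assumes rec: "\<And>k. G (k + 2) = G (k + 1) + G k"
  shows "5 * G (k + m) = of_int (fibz m) * G (k + 5) + of_int (fibz (m - 5)) * G k"
proof -
  define H where
    "H m = 5 * G (k + m) - of_int (fibz m) * G (k + 5) - of_int (fibz (m - 5)) * G k" for m
  have fib_rec: "of_int (fibz (x + 2)) = (of_int (fibz (x + 1)) + of_int (fibz x) :: 'a)" for x
    by (simp add: fibz_add_two)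
  have "H (x + 2) = H (x + 1) + H x" for x
    using rec[of "k + x"] fib_rec[of x] fib_rec[of "x - 5"]
    by (simp add: H_def algebra_simps)
  moreover have "H 0 = 0"
    by (simp add: H_def fibz_def numeral_eq_Suc)
  moreover have "H 1 = 0"
  proof -
    have "G (k + 5) = 5 * G (k + 1) + 3 * G k"
      using rec[of k] rec[of "k + 1"] rec[of "k + 2"] rec[of "k + 3"]
      by (simp add: algebra_simps)
    then show ?thesis by (simp add: H_def fibz_def numeral_eq_Suc)
  qed
  ultimately have "H m = 0" by (rule fib_recurrence_eq_zero)
  then show ?thesis by (simp add: H_def algebra_simps)
qed

lemma sum_power_weighted_telescope:
  fixes a b :: "'a :: comm_ring_1"
  shows "(\<Sum>j = 1..n. b ^ (n - j) * a ^ (j - 1) * (a * Y j - b * Y (j - 1)))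
         = a ^ n * Y n - b ^ n * Y 0"
proof (induction n)
  case (Suc n)
  have "(\<Sum>j = 1..Suc n. b ^ (Suc n - j) * a ^ (j - 1) * (a * Y j - b * Y (j - 1)))
      = b * (\<Sum>j = 1..n. b ^ (n - j) * a ^ (j - 1) * (a * Y j - b * Y (j - 1)))
        + a ^ n * (a * Y (Suc n) - b * Y n)"
    by (simp add: sum_distrib_left Suc_diff_le mult.assoc)
  also have "\<dots> = a ^ Suc n * Y (Suc n) - b ^ Suc n * Y 0"
    unfolding Suc.IH by (simp add: algebra_simps)
  finally show ?case .
qed simp

theorem proposition3:
  fixes G :: "int \<Rightarrow> complex" and n :: nat and m s t :: int
  assumes "gibonacci G" and "n \<ge> 1"
  shows "5 * (\<Sum>j = 1..n. (- of_int (fibz (m - 5))) ^ (n - j) * of_int (fibz m) ^ (j - 1)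
              * G (5 * (int j + t) + m + s))
         = of_int (fibz m) ^ n * G (5 * (int n + t + 1) + s)
           - (-1) ^ n * of_int (fibz (m - 5)) ^ n * G (5 * (t + 1) + s)"
proof -
  define a :: complex where "a = of_int (fibz m)"
  define b :: complex where "b = - of_int (fibz (m - 5))"
  define Y where "Y j = G (5 * (int j + t + 1) + s)" for j :: nat
  have summand: "5 * G (5 * (int j + t) + m + s) = a * Y j - b * Y (j - 1)" if "j \<ge> 1" for j
    using fib_recurrence_add_eq[OF gibonacci_add_two[OF assms(1)], of "5 * (int j + t) + s" m]
      that
    by (simp add: a_def b_def Y_def of_nat_diff algebra_simps)
  have "5 * (\<Sum>j = 1..n. b ^ (n - j) * a ^ (j - 1) * G (5 * (int j + t) + m + s))
      = (\<Sum>j = 1..n. b ^ (n - j) * a ^ (j - 1) * (a * Y j - b * Y (j - 1)))"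
    unfolding sum_distrib_left
  proof (rule sum.cong)
    fix j
    assume "j \<in> {1..n}"
    then show "5 * (b ^ (n - j) * a ^ (j - 1) * G (5 * (int j + t) + m + s))
        = b ^ (n - j) * a ^ (j - 1) * (a * Y j - b * Y (j - 1))"
      using summand[of j] by (metis atLeastAtMost_iff mult.assoc mult.left_commute)
  qed simp
  also have "\<dots> = a ^ n * Y n - b ^ n * Y 0"
    by (rule sum_power_weighted_telescope)
  finally show ?thesis
    by (simp add: a_def b_def Y_def power_minus' algebra_simps)
qed

end
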